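(* Let $z\sim\mathcal{N}(0,1)$ and $u\sim\mathcal{N}(0,I_k)$. Let $\alpha_0=\mathbb{E}[\phi'(z)]$, $\alpha_1=\mathbb{E}[\phi'(z)z]$, $\alpha_2=\mathbb{E}[\phi'(z)z^2]$, $\beta_0=\mathbb{E}[\phi'(z)^2]$, $\beta_2=\mathbb{E}[\phi'(z)^2z^2]$ (all assumed finite), and $\rho=\min\{\beta_0-\alpha_0^2-\alpha_1^2,\ \beta_2-\alpha_1^2-\alpha_2^2\}$. Then for every matrix $P=[p_1,p_2,\dots,p_k]\in\mathbb{R}^{k\times k}$ (with columns $p_i$), $$\mathbb{E}_{u}\Big[\Big(\sum_{i=1}^kp_i^\top u\cdot\phi'(u_i)\Big)^2\Big]\ge\rho\|P\|_F^2 .$$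
   Context: $\phi'$ is the (left) derivative of the activation function $\phi:\mathbb{R}\to\mathbb{R}$; $u_i$ is the $i$-th coordinate of $u$. *)

theory Defs
  imports "HOL-Probability.Probability"
begin

definition stdGauss :: "real measure" where
  "stdGauss = density lborel std_normal_density"

text \<open>Standard Gaussian N(0, I_k) on R^k, vectors represented as functions
  nat => real on the index set {0..<k} (product measure of k independent N(0,1)).\<close>
definition stdGaussVec :: "nat \<Rightarrow> (nat \<Rightarrow> real) measure" where
  "stdGaussVec k = PiM {..<k} (\<lambda>_. stdGauss)"

end

theory Submission
  imports Defs
begin

text \<open>Expanding the square and integrating coordinatewise, the expectation becomes a quadratic
  form in \<open>P\<close> whose coefficients are the one-dimensional moments \<open>E[z^a \<phi>'(z)^b]\<close>,
  \<open>a, b \<le> 2\<close>: the coordinates of \<open>u\<close> are independent with mean 0 and variance 1.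
  In terms of \<open>tr P\<close>, \<open>tr (P\<^sup>2)\<close>, the row sums, the diagonal and \<open>\<parallel>P\<parallel>\<^sub>F\<^sup>2\<close>, three
  elementary estimates finish the proof: \<open>tr (P\<^sup>2) \<ge> 2 \<Sum> p\<^sub>i\<^sub>i\<^sup>2 - \<parallel>P\<parallel>\<^sub>F\<^sup>2\<close> (from
  \<open>\<Sum> (p\<^sub>i\<^sub>j + p\<^sub>j\<^sub>i)\<^sup>2 \<ge> \<Sum> (2 p\<^sub>i\<^sub>i)\<^sup>2\<close>), completing a square in the row sums, and
  \<open>\<Sum> p\<^sub>i\<^sub>i\<^sup>2 \<le> \<parallel>P\<parallel>\<^sub>F\<^sup>2\<close>. What is left is
  \<open>\<rho>\<^sub>0 (\<parallel>P\<parallel>\<^sub>F\<^sup>2 - \<Sum> p\<^sub>i\<^sub>i\<^sup>2) + \<rho>\<^sub>2 \<Sum> p\<^sub>i\<^sub>i\<^sup>2\<close>, where \<open>\<rho>\<^sub>0, \<rho>\<^sub>2\<close> are the two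
  quantities under the minimum.\<close>

lemma prob_space_stdGauss: "prob_space stdGauss"
  unfolding stdGauss_def by (rule prob_space_normal_density) simp

lemma integrable_stdGauss_power: "integrable stdGauss (\<lambda>x. x ^ n)"
  unfolding stdGauss_def
  by (subst integrable_density) (auto simp: normal_density_nonneg integrable_std_normal_moment)

lemma integral_stdGauss_power:
  "integral\<^sup>L stdGauss (\<lambda>x. x ^ n) = integral\<^sup>L lborel (\<lambda>x. std_normal_density x * x ^ n)"
  unfolding stdGauss_def by (subst integral_density) (auto simp: normal_density_nonneg)

lemma product_sigma_finite_stdGauss: "product_sigma_finite (\<lambda>_. stdGauss)"
  unfolding product_sigma_finite_def
  using prob_space_stdGauss prob_space_imp_sigma_finite by blast

definition stdGauss_moment :: "(real \<Rightarrow> real) \<Rightarrow> nat \<Rightarrow> nat \<Rightarrow> real" where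
  "stdGauss_moment f a b = integral\<^sup>L stdGauss (\<lambda>x. x ^ a * f x ^ b)"

lemma stdGauss_moment_0_0: "stdGauss_moment f 0 0 = 1"
  by (simp add: stdGauss_moment_def prob_space.prob_space[OF prob_space_stdGauss])

lemma stdGauss_moment_1_0: "stdGauss_moment f 1 0 = 0"
  using integral_stdGauss_power[of 1] integral_std_normal_moment_odd[of 0]
  by (simp add: stdGauss_moment_def)

lemma stdGauss_moment_2_0: "stdGauss_moment f 2 0 = 1"
  using integral_stdGauss_power[of 2] integral_std_normal_moment_even[of 1]
  by (simp add: stdGauss_moment_def)

lemma sum_diag_square_le_frobenius:
  fixes P :: "nat \<Rightarrow> nat \<Rightarrow> real"
  shows "(\<Sum>i<k. (P i i)\<^sup>2) \<le> (\<Sum>i<k. \<Sum>j<k. (P j i)\<^sup>2)"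
  by (intro sum_mono member_le_sum) auto

lemma trace_of_square_lower_bound:
  fixes P :: "nat \<Rightarrow> nat \<Rightarrow> real"
  shows "2 * (\<Sum>i<k. (P i i)\<^sup>2) - (\<Sum>i<k. \<Sum>j<k. (P j i)\<^sup>2) \<le> (\<Sum>i<k. \<Sum>j<k. P j i * P i j)"
proof -
  have "4 * (\<Sum>i<k. (P i i)\<^sup>2) = (\<Sum>i<k. (P i i + P i i)\<^sup>2)"
    by (simp add: sum_distrib_left power2_eq_square algebra_simps)
  also have "\<dots> \<le> (\<Sum>i<k. \<Sum>j<k. (P j i + P i j)\<^sup>2)"
    by (intro sum_mono member_le_sum) auto
  also have "\<dots> = 2 * (\<Sum>i<k. \<Sum>j<k. (P j i)\<^sup>2) + 2 * (\<Sum>i<k. \<Sum>j<k. P j i * P i j)"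
  proof -
    have "(\<Sum>i<k. \<Sum>j<k. (P i j)\<^sup>2) = (\<Sum>i<k. \<Sum>j<k. (P j i)\<^sup>2)"
      by (rule sum.swap)
    then show ?thesis
      by (simp add: power2_sum sum.distrib sum_distrib_left mult.assoc)
  qed
  finally show ?thesis by simp
qed

lemma sum_square_cross_lower_bound:
  fixes x y :: "nat \<Rightarrow> real"
  shows "- b\<^sup>2 * (\<Sum>j\<in>A. (y j)\<^sup>2) \<le> a\<^sup>2 * (\<Sum>j\<in>A. (x j)\<^sup>2) + 2 * a * b * (\<Sum>j\<in>A. y j * x j)"
proof -
  have "0 \<le> (\<Sum>j\<in>A. (a * x j + b * y j)\<^sup>2)"
    by (simp add: sum_nonneg)
  also have "\<dots> = a\<^sup>2 * (\<Sum>j\<in>A. (x j)\<^sup>2) + 2 * a * b * (\<Sum>j\<in>A. y j * x j) + b\<^sup>2 * (\<Sum>j\<in>A. (y j)\<^sup>2)"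
    by (simp add: power2_sum power_mult_distrib sum.distrib sum_distrib_left algebra_simps)
  finally show ?thesis by simp
qed

definition count_pair :: "nat \<Rightarrow> nat \<Rightarrow> nat \<Rightarrow> nat" where
  "count_pair l a b = of_bool (l = a) + of_bool (l = b)"

lemma prod_power_of_bool:
  fixes y :: "nat \<Rightarrow> 'a::comm_monoid_mult"
  assumes "a \<in> A" "finite A"
  shows "(\<Prod>l\<in>A. y l ^ of_bool (l = a)) = y a"
proof -
  have "(\<Prod>l\<in>A. y l ^ of_bool (l = a)) = (\<Prod>l\<in>A. if l = a then y l else 1)"
    by (rule prod.cong) auto
  then show ?thesis using assms by simp
qed

lemma four_factor_as_product:
  fixes u :: "nat \<Rightarrow> real"
  assumes "i < k" "j < k" "i' < k" "j' < k"
  shows "u j * f (u i) * u j' * f (u i') = (\<Prod>l<k. u l ^ count_pair l j j' * f (u l) ^ count_pair l i i')"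
  using assms by (simp add: count_pair_def power_add prod.distrib prod_power_of_bool)

text \<open>\<open>pair_moment \<alpha>\<^sub>0 \<alpha>\<^sub>1 \<alpha>\<^sub>2 \<beta>\<^sub>0 \<beta>\<^sub>2 i j i' j'\<close> is \<open>E[u\<^sub>j \<phi>'(u\<^sub>i) u\<^sub>j\<^sub>' \<phi>'(u\<^sub>i\<^sub>')]\<close> for standard Gaussian \<open>u\<close>.\<close>

definition pair_moment :: "real \<Rightarrow> real \<Rightarrow> real \<Rightarrow> real \<Rightarrow> real \<Rightarrow> nat \<Rightarrow> nat \<Rightarrow> nat \<Rightarrow> nat \<Rightarrow> real" where
  "pair_moment a0 a1 a2 b0 b2 i j i' j' =
       a1\<^sup>2 * of_bool (j = i \<and> j' = i') + a1\<^sup>2 * of_bool (j = i' \<and> j' = i)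
     + a0\<^sup>2 * of_bool (j = j')
     + (a0 * a2 - a0\<^sup>2) * of_bool (j = j' \<and> j = i) + (a0 * a2 - a0\<^sup>2) * of_bool (j = j' \<and> j = i')
     + (b0 - a0\<^sup>2) * of_bool (i = i' \<and> j = j')
     + (b2 - b0 - 2 * a1\<^sup>2 - 2 * a0 * a2 + 2 * a0\<^sup>2) * of_bool (i = i' \<and> j = j' \<and> j = i)"

lemma prod_stdGauss_moment_count_pair:
  assumes "i < k" "j < k" "i' < k" "j' < k"
  shows "(\<Prod>l<k. stdGauss_moment f (count_pair l j j') (count_pair l i i')) =
    pair_moment (stdGauss_moment f 0 1) (stdGauss_moment f 1 1) (stdGauss_moment f 2 1)
                (stdGauss_moment f 0 2) (stdGauss_moment f 2 2) i j i' j'"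
proof -
  have "(\<Prod>l<k. stdGauss_moment f (count_pair l j j') (count_pair l i i')) =
        (\<Prod>l\<in>{i,j,i',j'}. stdGauss_moment f (count_pair l j j') (count_pair l i i'))"
    by (rule prod.mono_neutral_right) (use assms in \<open>auto simp: count_pair_def stdGauss_moment_0_0\<close>)
  then show ?thesis
    by (cases "i = j"; cases "i = i'"; cases "i = j'"; cases "j = i'"; cases "j = j'"; cases "i' = j'")
       (simp_all add: pair_moment_def count_pair_def stdGauss_moment_0_0 stdGauss_moment_1_0[simplified]
          stdGauss_moment_2_0[simplified numeral_2_eq_2] prod.insert_if numeral_2_eq_2 power2_eq_square algebra_simps)
qed

lemma sum_if_const_zero: "(\<Sum>x\<in>A. if c then g x else 0) = (if c then sum g A else 0)"
  by simp

lemma sum_delta_contractions: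
  fixes P :: "nat \<Rightarrow> nat \<Rightarrow> real" and k :: nat
  shows "(\<Sum>i<k. \<Sum>j<k. \<Sum>i'<k. \<Sum>j'<k. P j i * P j' i' * of_bool (j = i \<and> j' = i')) = (\<Sum>i<k. P i i)\<^sup>2"
    and "(\<Sum>i<k. \<Sum>j<k. \<Sum>i'<k. \<Sum>j'<k. P j i * P j' i' * of_bool (j = i' \<and> j' = i)) = (\<Sum>i<k. \<Sum>j<k. P j i * P i j)"
    and "(\<Sum>i<k. \<Sum>j<k. \<Sum>i'<k. \<Sum>j'<k. P j i * P j' i' * of_bool (j = j')) = (\<Sum>j<k. (\<Sum>i<k. P j i)\<^sup>2)"
    and "(\<Sum>i<k. \<Sum>j<k. \<Sum>i'<k. \<Sum>j'<k. P j i * P j' i' * of_bool (j = j' \<and> j = i)) = (\<Sum>j<k. P j j * (\<Sum>i<k. P j i))"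
    and "(\<Sum>i<k. \<Sum>j<k. \<Sum>i'<k. \<Sum>j'<k. P j i * P j' i' * of_bool (j = j' \<and> j = i')) = (\<Sum>j<k. P j j * (\<Sum>i<k. P j i))"
    and "(\<Sum>i<k. \<Sum>j<k. \<Sum>i'<k. \<Sum>j'<k. P j i * P j' i' * of_bool (i = i' \<and> j = j')) = (\<Sum>i<k. \<Sum>j<k. (P j i)\<^sup>2)"
    and "(\<Sum>i<k. \<Sum>j<k. \<Sum>i'<k. \<Sum>j'<k. P j i * P j' i' * of_bool (i = i' \<and> j = j' \<and> j = i)) = (\<Sum>i<k. (P i i)\<^sup>2)"
  apply (simp_all add: of_bool_def if_distrib[of "\<lambda>x. _ * x"] if_if_eq_conj[symmetric] sum_if_const_zero
    sum.delta sum.delta' power2_eq_square sum_product sum_distrib_left cong: if_cong)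
  subgoal by (simp add: sum_distrib_right, rule sum.swap)
  subgoal by (subst sum.swap) (simp add: sum_distrib_right sum.swap[where g = "\<lambda>n i. P _ i * P _ n"])
  subgoal by (subst sum.swap) (simp add: mult.commute)
  done

lemma sum_pair_moment:
  fixes P :: "nat \<Rightarrow> nat \<Rightarrow> real"
  shows "(\<Sum>i<k. \<Sum>j<k. \<Sum>i'<k. \<Sum>j'<k. P j i * P j' i' * pair_moment a0 a1 a2 b0 b2 i j i' j') =
     a1\<^sup>2 * (\<Sum>i<k. P i i)\<^sup>2 + a1\<^sup>2 * (\<Sum>i<k. \<Sum>j<k. P j i * P i j)
   + a0\<^sup>2 * (\<Sum>j<k. (\<Sum>i<k. P j i)\<^sup>2) + 2 * (a0 * a2 - a0\<^sup>2) * (\<Sum>j<k. P j j * (\<Sum>i<k. P j i))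
   + (b0 - a0\<^sup>2) * (\<Sum>i<k. \<Sum>j<k. (P j i)\<^sup>2)
   + (b2 - b0 - 2 * a1\<^sup>2 - 2 * a0 * a2 + 2 * a0\<^sup>2) * (\<Sum>i<k. (P i i)\<^sup>2)"
  unfolding pair_moment_def distrib_left sum.distrib
  by (simp only: sum_distrib_left[symmetric] mult.left_commute[of "P _ _ * P _ _"] sum_delta_contractions)

lemma pair_moment_form_lower_bound:
  fixes P :: "nat \<Rightarrow> nat \<Rightarrow> real"
  shows "min (b0 - a0\<^sup>2 - a1\<^sup>2) (b2 - a1\<^sup>2 - a2\<^sup>2) * (\<Sum>i<k. \<Sum>j<k. (P j i)\<^sup>2) \<le>
     a1\<^sup>2 * (\<Sum>i<k. P i i)\<^sup>2 + a1\<^sup>2 * (\<Sum>i<k. \<Sum>j<k. P j i * P i j)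
   + a0\<^sup>2 * (\<Sum>j<k. (\<Sum>i<k. P j i)\<^sup>2) + 2 * (a0 * a2 - a0\<^sup>2) * (\<Sum>j<k. P j j * (\<Sum>i<k. P j i))
   + (b0 - a0\<^sup>2) * (\<Sum>i<k. \<Sum>j<k. (P j i)\<^sup>2)
   + (b2 - b0 - 2 * a1\<^sup>2 - 2 * a0 * a2 + 2 * a0\<^sup>2) * (\<Sum>i<k. (P i i)\<^sup>2)"
    (is "min ?r0 ?r2 * ?F \<le> a1\<^sup>2 * ?D\<^sup>2 + a1\<^sup>2 * ?T + a0\<^sup>2 * ?R + 2 * (a0 * a2 - a0\<^sup>2) * ?C + _ * ?F + _ * ?E")
proof -
  have E_le_F: "?E \<le> ?F" by (rule sum_diag_square_le_frobenius)
  have "0 \<le> ?E" by (simp add: sum_nonneg)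
  then have "min ?r0 ?r2 * (?F - ?E) \<le> ?r0 * (?F - ?E)" "min ?r0 ?r2 * ?E \<le> ?r2 * ?E"
    using E_le_F by (simp_all add: mult_right_mono)
  then have "min ?r0 ?r2 * ?F \<le> ?r0 * (?F - ?E) + ?r2 * ?E"
    by (simp add: algebra_simps)
  also have "\<dots> = a1\<^sup>2 * (2 * ?E - ?F) - (a2 - a0)\<^sup>2 * ?E + (b0 - a0\<^sup>2) * ?F
      + (b2 - b0 - 2 * a1\<^sup>2 - 2 * a0 * a2 + 2 * a0\<^sup>2) * ?E"
    by (simp add: power2_diff algebra_simps)
  also have "\<dots> \<le> a1\<^sup>2 * ?D\<^sup>2 + a1\<^sup>2 * ?T + a0\<^sup>2 * ?R + 2 * (a0 * a2 - a0\<^sup>2) * ?C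
      + (b0 - a0\<^sup>2) * ?F + (b2 - b0 - 2 * a1\<^sup>2 - 2 * a0 * a2 + 2 * a0\<^sup>2) * ?E"
  proof -
    have "0 \<le> a1\<^sup>2 * ?D\<^sup>2" by simp
    moreover have "a1\<^sup>2 * (2 * ?E - ?F) \<le> a1\<^sup>2 * ?T"
      by (intro mult_left_mono trace_of_square_lower_bound) simp
    moreover have "- (a2 - a0)\<^sup>2 * ?E \<le> a0\<^sup>2 * ?R + 2 * (a0 * a2 - a0\<^sup>2) * ?C"
    proof -
      have "2 * (a0 * a2 - a0\<^sup>2) = 2 * a0 * (a2 - a0)"
        by (simp add: power2_eq_square algebra_simps)
      then show ?thesis
        using sum_square_cross_lower_bound[of "a2 - a0" "\<lambda>j. P j j" "{..<k}" a0 "\<lambda>j. \<Sum>i<k. P j i"]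
        by simp
    qed
    ultimately show ?thesis by linarith
  qed
  finally show ?thesis .
qed

lemma power2_sum_linear_times_factor:
  fixes P :: "nat \<Rightarrow> nat \<Rightarrow> real" and u g :: "nat \<Rightarrow> real"
  shows "(\<Sum>i<k. (\<Sum>j<k. P j i * u j) * g i)\<^sup>2 =
    (\<Sum>i<k. \<Sum>j<k. \<Sum>i'<k. \<Sum>j'<k. P j i * P j' i' * (u j * g i * u j' * g i'))"
proof -
  have "(\<Sum>i<k. (\<Sum>j<k. P j i * u j) * g i)\<^sup>2 =
      (\<Sum>i<k. \<Sum>i'<k. ((\<Sum>j<k. P j i * u j) * g i) * ((\<Sum>j'<k. P j' i' * u j') * g i'))"
    by (simp add: power2_eq_square sum_product)
  also have "\<dots> = (\<Sum>i<k. \<Sum>i'<k. \<Sum>j<k. \<Sum>j'<k. P j i * P j' i' * (u j * g i * u j' * g i'))"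
    by (intro sum.cong refl) (simp add: sum_product sum_distrib_left sum_distrib_right mult_ac, subst sum.swap, simp add: mult_ac)
  also have "\<dots> = (\<Sum>i<k. \<Sum>j<k. \<Sum>i'<k. \<Sum>j'<k. P j i * P j' i' * (u j * g i * u j' * g i'))"
    by (rule sum.cong[OF refl], rule sum.swap)
  finally show ?thesis .
qed

context
  fixes f :: "real \<Rightarrow> real"
  assumes int_f: "integrable stdGauss f"
    and int_f_x: "integrable stdGauss (\<lambda>x. f x * x)"
    and int_f_x2: "integrable stdGauss (\<lambda>x. f x * x\<^sup>2)"
    and int_f2: "integrable stdGauss (\<lambda>x. (f x)\<^sup>2)"
    and int_f2_x2: "integrable stdGauss (\<lambda>x. (f x)\<^sup>2 * x\<^sup>2)"
begin

lemma integrable_stdGauss_x_f2: "integrable stdGauss (\<lambda>x. x * (f x)\<^sup>2)"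
proof (rule Bochner_Integration.integrable_bound[OF Bochner_Integration.integrable_add[OF int_f2 int_f2_x2]])
  show "(\<lambda>x. x * (f x)\<^sup>2) \<in> borel_measurable stdGauss"
    using borel_measurable_integrable[OF integrable_stdGauss_power[of 1]] borel_measurable_integrable[OF int_f2]
    by (simp add: borel_measurable_times)
  have "\<bar>x\<bar> * (f x)\<^sup>2 \<le> (1 + x\<^sup>2) * (f x)\<^sup>2" for x
  proof (rule mult_right_mono)
    show "\<bar>x\<bar> \<le> 1 + x\<^sup>2"
      using power2_diff[of "\<bar>x\<bar>" 1] zero_le_power2[of "\<bar>x\<bar> - 1"] by (simp add: power2_abs)
  qed simp
  then show "AE x in stdGauss. norm (x * (f x)\<^sup>2) \<le> norm ((f x)\<^sup>2 + (f x)\<^sup>2 * x\<^sup>2)"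
    by (intro AE_I2) (simp add: abs_mult algebra_simps)
qed

lemma integrable_stdGauss_moment:
  assumes "a \<le> 2" "b \<le> 2"
  shows "integrable stdGauss (\<lambda>x. x ^ a * f x ^ b)"
proof -
  consider "b = 0" | "a \<in> {0, 1, 2}" "b \<in> {1, 2}"
    using assms by force
  then show ?thesis
  proof cases
    case 1
    then show ?thesis using integrable_stdGauss_power[of a] by simp
  next
    case 2
    then show ?thesis
      using int_f int_f_x int_f_x2 int_f2 int_f2_x2 integrable_stdGauss_x_f2
      by (auto simp: mult.commute)
  qed
qed

lemma integral_four_factor:
  assumes "i < k" "j < k" "i' < k" "j' < k"
  shows "integrable (stdGaussVec k) (\<lambda>u. u j * f (u i) * u j' * f (u i'))"
    and "integral\<^sup>L (stdGaussVec k) (\<lambda>u. u j * f (u i) * u j' * f (u i')) =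
       pair_moment (stdGauss_moment f 0 1) (stdGauss_moment f 1 1) (stdGauss_moment f 2 1)
                   (stdGauss_moment f 0 2) (stdGauss_moment f 2 2) i j i' j'"
proof -
  interpret product_sigma_finite "\<lambda>_. stdGauss"
    by (rule product_sigma_finite_stdGauss)
  have int_factor: "integrable stdGauss (\<lambda>x. x ^ count_pair l j j' * f x ^ count_pair l i i')" for l
    by (rule integrable_stdGauss_moment) (simp_all add: count_pair_def)
  have eq: "(\<lambda>u. u j * f (u i) * u j' * f (u i')) =
      (\<lambda>u. \<Prod>l<k. u l ^ count_pair l j j' * f (u l) ^ count_pair l i i')"
    using four_factor_as_product[OF assms] by blast
  show "integrable (stdGaussVec k) (\<lambda>u. u j * f (u i) * u j' * f (u i'))"
    unfolding eq stdGaussVec_def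
    by (rule product_integrable_prod[of "{..<k}" "\<lambda>l x. x ^ count_pair l j j' * f x ^ count_pair l i i'", simplified])
       (use int_factor in auto)
  have "integral\<^sup>L (stdGaussVec k) (\<lambda>u. u j * f (u i) * u j' * f (u i')) =
      (\<Prod>l<k. stdGauss_moment f (count_pair l j j') (count_pair l i i'))"
    unfolding eq stdGaussVec_def stdGauss_moment_def
    by (rule product_integral_prod[of "{..<k}" "\<lambda>l x. x ^ count_pair l j j' * f x ^ count_pair l i i'", simplified])
       (use int_factor in auto)
  then show "integral\<^sup>L (stdGaussVec k) (\<lambda>u. u j * f (u i) * u j' * f (u i')) =
       pair_moment (stdGauss_moment f 0 1) (stdGauss_moment f 1 1) (stdGauss_moment f 2 1)
                   (stdGauss_moment f 0 2) (stdGauss_moment f 2 2) i j i' j'"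
    using prod_stdGauss_moment_count_pair[OF assms] by simp
qed

lemma integral_stdGaussVec_square:
  fixes P :: "nat \<Rightarrow> nat \<Rightarrow> real"
  shows "integral\<^sup>L (stdGaussVec k) (\<lambda>u. (\<Sum>i<k. (\<Sum>j<k. P j i * u j) * f (u i))\<^sup>2) =
    (\<Sum>i<k. \<Sum>j<k. \<Sum>i'<k. \<Sum>j'<k. P j i * P j' i' *
       pair_moment (stdGauss_moment f 0 1) (stdGauss_moment f 1 1) (stdGauss_moment f 2 1)
                   (stdGauss_moment f 0 2) (stdGauss_moment f 2 2) i j i' j')"
proof -
  have "integrable (stdGaussVec k) (\<lambda>u. P j i * P j' i' * (u j * f (u i) * u j' * f (u i')))"
    if "i < k" "j < k" "i' < k" "j' < k" for i j i' j'
    by (intro integrable_mult_right integral_four_factor that)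
  then have "integral\<^sup>L (stdGaussVec k)
      (\<lambda>u. \<Sum>i<k. \<Sum>j<k. \<Sum>i'<k. \<Sum>j'<k. P j i * P j' i' * (u j * f (u i) * u j' * f (u i'))) =
    (\<Sum>i<k. \<Sum>j<k. \<Sum>i'<k. \<Sum>j'<k.
      integral\<^sup>L (stdGaussVec k) (\<lambda>u. P j i * P j' i' * (u j * f (u i) * u j' * f (u i'))))"
    by (subst Bochner_Integration.integral_sum,
        auto intro!: Bochner_Integration.integrable_sum sum.cong)+
  then show ?thesis
    unfolding power2_sum_linear_times_factor by (simp add: integral_four_factor)
qed

end

theorem mainTheorem6:
  fixes \<phi> \<phi>' :: "real \<Rightarrow> real" and k :: nat and P :: "nat \<Rightarrow> nat \<Rightarrow> real"
  assumes left_deriv: "\<And>x. (\<phi> has_real_derivative \<phi>' x) (at_left x)"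
    and int_a0: "integrable stdGauss (\<lambda>z. \<phi>' z)"
    and int_a1: "integrable stdGauss (\<lambda>z. \<phi>' z * z)"
    and int_a2: "integrable stdGauss (\<lambda>z. \<phi>' z * z\<^sup>2)"
    and int_b0: "integrable stdGauss (\<lambda>z. (\<phi>' z)\<^sup>2)"
    and int_b2: "integrable stdGauss (\<lambda>z. (\<phi>' z)\<^sup>2 * z\<^sup>2)"
  defines "\<alpha>0 \<equiv> integral\<^sup>L stdGauss (\<lambda>z. \<phi>' z)"
    and "\<alpha>1 \<equiv> integral\<^sup>L stdGauss (\<lambda>z. \<phi>' z * z)"
    and "\<alpha>2 \<equiv> integral\<^sup>L stdGauss (\<lambda>z. \<phi>' z * z\<^sup>2)"
    and "\<beta>0 \<equiv> integral\<^sup>L stdGauss (\<lambda>z. (\<phi>' z)\<^sup>2)"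
    and "\<beta>2 \<equiv> integral\<^sup>L stdGauss (\<lambda>z. (\<phi>' z)\<^sup>2 * z\<^sup>2)"
  defines "\<rho> \<equiv> min (\<beta>0 - \<alpha>0\<^sup>2 - \<alpha>1\<^sup>2) (\<beta>2 - \<alpha>1\<^sup>2 - \<alpha>2\<^sup>2)"
  shows "integral\<^sup>L (stdGaussVec k)
           (\<lambda>u. (\<Sum>i<k. (\<Sum>j<k. P j i * u j) * \<phi>' (u i))\<^sup>2)
         \<ge> \<rho> * (\<Sum>i<k. \<Sum>j<k. (P j i)\<^sup>2)"
proof -
  have moments: "stdGauss_moment \<phi>' 0 1 = \<alpha>0" "stdGauss_moment \<phi>' 1 1 = \<alpha>1"
    "stdGauss_moment \<phi>' 2 1 = \<alpha>2" "stdGauss_moment \<phi>' 0 2 = \<beta>0" "stdGauss_moment \<phi>' 2 2 = \<beta>2"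
    by (simp_all add: stdGauss_moment_def \<alpha>0_def \<alpha>1_def \<alpha>2_def \<beta>0_def \<beta>2_def mult.commute)
  have "integral\<^sup>L (stdGaussVec k) (\<lambda>u. (\<Sum>i<k. (\<Sum>j<k. P j i * u j) * \<phi>' (u i))\<^sup>2) =
      (\<Sum>i<k. \<Sum>j<k. \<Sum>i'<k. \<Sum>j'<k. P j i * P j' i' * pair_moment \<alpha>0 \<alpha>1 \<alpha>2 \<beta>0 \<beta>2 i j i' j')"
    using integral_stdGaussVec_square[OF int_a0 int_a1 int_a2 int_b0 int_b2] unfolding moments .
  then show ?thesis
    unfolding sum_pair_moment \<rho>_def using pair_moment_form_lower_bound by simp
qed

end
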